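(* Let $\kappa\ge\aleph_0$ be a cardinal, let $P$ be a $d$-dimensional $k$-template, and let $X_0,X_1,\dots,X_{d-1}$ be sets with $|X_i|\ge\kappa^{+i}$ for each $i<d$. Let $X=X_0\times X_1\times\cdots\times X_{d-1}$. Then $\chi(L(X,P))\ge\kappa$.
   Context: Here $1\le d<\omega$, $2\le k<\omega$. A $d$-dimensional $k$-template is a set $P$ of $d$-tuples with $|P|=k$. If $P,Q$ are $d$-dimensional templates, $Q$ is a homomorphic image of $P$ if there is a surjection $f:P\to Q$ such that for all $x,y\in P$ and $i<d$, $x_i=y_i$ implies $f(x)_i=f(y)_i$. For $X=X_0\times\cdots\times X_{d-1}$, $L(X,P)$ is the $k$-hypergraph with vertex set $X$ whose edges are the $k$-templates $Q\subseteq X$ that are homomorphic images of $P$. $\chi$ is the chromatic number (least cardinal number of colors in a vertex coloring not constant on any edge). $\kappa^+$ is the successor cardinal, $\kappa^{+0}=\kappa$, $\kappa^{+(n+1)}=(\kappa^{+n})^+$. *)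

theory Defs
  imports Main
begin

text \<open>d-dimensional tuples are lists of length d.  A d-dimensional k-template
 is a set of k such tuples.\<close>
definition template :: "nat \<Rightarrow> nat \<Rightarrow> 'a list set \<Rightarrow> bool" where
  "template d k P \<longleftrightarrow> (\<forall>x\<in>P. length x = d) \<and> finite P \<and> card P = k"

definition hom_image :: "nat \<Rightarrow> 'b list set \<Rightarrow> 'a list set \<Rightarrow> bool" where
  "hom_image d P Q \<longleftrightarrow> (\<exists>f. f ` P = Q \<and>
      (\<forall>x\<in>P. \<forall>y\<in>P. \<forall>i<d. x ! i = y ! i \<longrightarrow> f x ! i = f y ! i))"

definition prod_tuples :: "nat \<Rightarrow> (nat \<Rightarrow> 'a set) \<Rightarrow> 'a list set" where
  "prod_tuples d X = {x. length x = d \<and> (\<forall>i<d. x ! i \<in> X i)}"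

text \<open>Edge set of the k-hypergraph L(X,P) (its vertex set is prod_tuples d X).\<close>
definition L_edges :: "nat \<Rightarrow> (nat \<Rightarrow> 'a set) \<Rightarrow> 'b list set \<Rightarrow> 'a list set set" where
  "L_edges d X P = {Q. Q \<subseteq> prod_tuples d X \<and> template d (card P) Q \<and> hom_image d P Q}"

definition proper_coloring :: "'v set \<Rightarrow> 'v set set \<Rightarrow> ('v \<Rightarrow> 'c) \<Rightarrow> bool" where
  "proper_coloring V E c \<longleftrightarrow> (\<forall>e\<in>E. \<not> (\<exists>a. \<forall>x\<in>e. c x = a))"

definition chi_ge :: "'v set \<Rightarrow> 'v set set \<Rightarrow> 'k rel \<Rightarrow> 'c itself \<Rightarrow> bool" where
  "chi_ge V E kappa (_::'c itself) \<longleftrightarrow>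
     (\<forall>c::'v \<Rightarrow> 'c. proper_coloring V E c \<longrightarrow> \<not> ((card_of (c ` V), kappa) \<in> ordLess))"

text \<open>succ_pow kappa i r: r is a cardinal (order) isomorphic to kappa^{+i}.\<close>
fun succ_pow :: "'k rel \<Rightarrow> nat \<Rightarrow> 'a rel \<Rightarrow> bool" where
  "succ_pow kappa 0 r = (Card_order r \<and> (r, kappa) \<in> ordIso)"
| "succ_pow kappa (Suc i) r =
     (Card_order r \<and> (\<exists>s::'a rel. succ_pow kappa i s \<and> (r, cardSuc s) \<in> ordIso))"

end

theory Submission
  imports Defs
begin

text \<open>By induction on the dimension n, in the manner of Erdos and Rado: a colouring of
  X_0 x ... x X_(n-1) with fewer than kappa colours has, for every finite k, a monochromatic
  box B_0 x ... x B_(n-1) with |B_i| = k.  For the step, shrink X_i (i < n) to size exactly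
  kappa^(+i).  Every y in X_n yields, by induction, a monochromatic box for the slice
  colouring t \<mapsto> c (t @ [y]); the pair (box, colour) ranges over at most kappa^(+(n-1))
  values, fewer than |X_n|, so infinitely many y share one, and k of them extend the box by
  one side.  Coordinatewise injections then map the template P into such a box, and the image
  is a monochromatic edge of L(X,P).\<close>

unbundle cardinal_syntax

lemma card_of_finite_ordLeq_infinite:
  assumes "finite A" and "infinite W"
  shows "|A| \<le>o |W|"
  using assms ordLess_imp_ordLeq finite_ordLess_infinite[OF card_of_Well_order card_of_Well_order]
  by (metis Field_card_of)

lemma card_of_lists_ordLeq_infinite:
  assumes "infinite W" and "|A| \<le>o |W|"
  shows "|lists A| \<le>o |W|"
proof -
  define L where "L m = {xs. set xs \<subseteq> A \<and> length xs = m}" for m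
  have "|L m| \<le>o |W|" for m
  proof (induction m)
    case 0
    have "L 0 = {[]}" by (auto simp: L_def)
    then show ?case using card_of_finite_ordLeq_infinite[OF _ assms(1), of "{[]}"] by simp
  next
    case (Suc m)
    have "|L m \<times> A| \<le>o |W|"
      using card_of_Times_ordLeq_infinite_Field[of "|W|" "L m" A] Suc.IH assms
      by (simp add: card_of_card_order_on Field_card_of)
    then show ?case
      unfolding L_def lists_length_Suc_eq by (rule ordLeq_transitive[OF card_of_image])
  qed
  then have "|\<Union>m\<in>UNIV. L m| \<le>o |W|"
    using card_of_UNION_ordLeq_infinite[OF assms(1)] assms(1) infinite_iff_card_of_nat by blast
  moreover have "lists A = (\<Union>m\<in>UNIV. L m)" by (auto simp: L_def)
  ultimately show ?thesis by simp
qed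

lemma card_of_Fpow_ordLeq_infinite:
  assumes "infinite W" and "|A| \<le>o |W|"
  shows "|Fpow A| \<le>o |W|"
proof -
  have "Fpow A \<subseteq> set ` lists A"
  proof
    fix B assume "B \<in> Fpow A"
    then obtain xs where "set xs = B" "B \<subseteq> A" using finite_list unfolding Fpow_def by blast
    then show "B \<in> set ` lists A" by auto
  qed
  then have "|Fpow A| \<le>o |lists A|"
    by (rule ordLeq_transitive[OF card_of_mono1 card_of_image])
  then show ?thesis by (rule ordLeq_transitive[OF _ card_of_lists_ordLeq_infinite[OF assms]])
qed

lemma card_of_lists_Fpow_Times_ordLess_cardSuc:
  assumes s: "Card_order s" "infinite (Field s)" and "|Z| \<le>o s" and "|C| \<le>o s"
  shows "|lists (Fpow Z) \<times> C| <o cardSuc s"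
proof -
  have Fs: "|Field s| =o s" using card_of_Field_ordIso[OF s(1)] .
  have "|Z| \<le>o |Field s|" by (rule ordLeq_ordIso_trans[OF assms(3) ordIso_symmetric[OF Fs]])
  then have "|lists (Fpow Z)| \<le>o |Field s|"
    by (intro card_of_lists_ordLeq_infinite card_of_Fpow_ordLeq_infinite s(2))
  then have "|lists (Fpow Z)| \<le>o s" by (rule ordLeq_ordIso_trans[OF _ Fs])
  then have "|lists (Fpow Z) \<times> C| \<le>o s"
    by (rule card_of_Times_ordLeq_infinite_Field[OF s(2) _ assms(4) s(1)])
  then show ?thesis by (rule ordLeq_ordLess_trans[OF _ cardSuc_greater[OF s(1)]])
qed

lemma infinite_fiber:
  assumes "F ` A \<subseteq> D" and "|D| <o |A|" and "infinite A"
  shows "\<exists>p\<in>D. infinite {y\<in>A. F y = p}"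
proof (rule ccontr)
  assume "\<not> ?thesis"
  then have fin: "\<forall>p\<in>D. finite {y\<in>A. F y = p}" by blast
  have A: "A \<subseteq> (\<Union>p\<in>D. {y\<in>A. F y = p})" using assms(1) by auto
  show False
  proof (cases "finite D")
    case True
    then show False using fin finite_subset[OF A] assms(3) by blast
  next
    case False
    have "\<forall>p\<in>D. |{y\<in>A. F y = p}| \<le>o |D|"
      using fin card_of_finite_ordLeq_infinite[OF _ False] by blast
    then have "|\<Union>p\<in>D. {y\<in>A. F y = p}| \<le>o |D|"
      by (rule card_of_UNION_ordLeq_infinite[OF False ordIso_imp_ordLeq[OF card_of_refl]])
    then have "|A| \<le>o |D|" by (rule ordLeq_transitive[OF card_of_mono1[OF A]])
    then show False using assms(2) not_ordLess_ordLeq by blast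
  qed
qed

lemma exists_subset_card_of_ordIso:
  assumes "Card_order r" and "r \<le>o |X|"
  shows "\<exists>Y\<subseteq>X. |Y| =o r"
proof -
  have Fr: "|Field r| =o r" using card_of_Field_ordIso[OF assms(1)] .
  then have "|Field r| \<le>o |X|" by (rule ordIso_ordLeq_trans[OF _ assms(2)])
  then obtain f where f: "inj_on f (Field r)" "f ` Field r \<subseteq> X"
    unfolding card_of_ordLeq[symmetric] by blast
  have "bij_betw f (Field r) (f ` Field r)" by (rule inj_on_imp_bij_betw[OF f(1)])
  then have "|Field r| =o |f ` Field r|" using card_of_ordIso by blast
  then have "|f ` Field r| =o r" by (rule ordIso_transitive[OF ordIso_symmetric Fr])
  then show ?thesis using f(2) by blast
qed

lemma succ_pow_Card_order: "succ_pow \<kappa> i r \<Longrightarrow> Card_order r"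
  by (cases i) auto

lemma succ_pow_ordIso:
  fixes r r' :: "'a rel"
  assumes "succ_pow \<kappa> i r" and "succ_pow \<kappa> i r'"
  shows "r =o r'"
  using assms
proof (induction i arbitrary: r r')
  case 0
  then have "r =o \<kappa>" "r' =o \<kappa>" by auto
  then show ?case using ordIso_transitive ordIso_symmetric by blast
next
  case (Suc i)
  obtain s s' :: "'a rel" where s: "succ_pow \<kappa> i s" "r =o cardSuc s"
    and s': "succ_pow \<kappa> i s'" "r' =o cardSuc s'"
    using Suc.prems by auto
  have "cardSuc s =o cardSuc s'"
    using Suc.IH[OF s(1) s'(1)] cardSuc_invar_ordIso succ_pow_Card_order s s' by blast
  then show ?case
    using ordIso_transitive[OF s(2) ordIso_transitive[OF _ ordIso_symmetric[OF s'(2)]]] by blast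
qed

lemma succ_pow_ordLess_Suc:
  fixes r s :: "'a rel"
  assumes "succ_pow \<kappa> i s" and "succ_pow \<kappa> (Suc i) r"
  shows "s <o r"
proof -
  obtain s' :: "'a rel" where s': "succ_pow \<kappa> i s'" "r =o cardSuc s'"
    using assms(2) by auto
  have "s =o s'" using succ_pow_ordIso assms(1) s'(1) by blast
  moreover have "s' <o cardSuc s'" using cardSuc_greater succ_pow_Card_order s'(1) by blast
  ultimately show ?thesis
    using s'(2) ordIso_ordLess_trans ordLess_ordIso_trans ordIso_symmetric by blast
qed

lemma succ_pow_mono:
  fixes r s :: "'a rel"
  assumes "succ_pow \<kappa> i r" and "succ_pow \<kappa> j s" and "i \<le> j"
  shows "r \<le>o s"
  using assms
proof (induction j arbitrary: s)
  case 0
  then show ?case using succ_pow_ordIso ordIso_imp_ordLeq by fastforce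
next
  case (Suc j)
  show ?case
  proof (cases "i = Suc j")
    case True
    then show ?thesis
      using succ_pow_ordIso[of \<kappa> "Suc j" r s] Suc.prems ordIso_imp_ordLeq by simp
  next
    case False
    obtain s' :: "'a rel" where s': "succ_pow \<kappa> j s'" using Suc.prems(2) by auto
    have "r \<le>o s'" using Suc.IH[OF Suc.prems(1) s'] Suc.prems(3) False by simp
    moreover have "s' <o s" by (rule succ_pow_ordLess_Suc[OF s' Suc.prems(2)])
    ultimately show ?thesis by (rule ordLess_imp_ordLeq[OF ordLeq_ordLess_trans])
  qed
qed

lemma succ_pow_ordLeq_base:
  fixes r :: "'a rel"
  assumes "succ_pow \<kappa> i r"
  shows "\<kappa> \<le>o r"
  using assms
proof (induction i arbitrary: r)
  case 0
  then have "r =o \<kappa>" by simp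
  then show ?case by (rule ordIso_imp_ordLeq[OF ordIso_symmetric])
next
  case (Suc i)
  obtain s :: "'a rel" where s: "succ_pow \<kappa> i s" using Suc.prems by auto
  have "s <o r" by (rule succ_pow_ordLess_Suc[OF s Suc.prems])
  then show ?case by (rule ordLess_imp_ordLeq[OF ordLeq_ordLess_trans[OF Suc.IH[OF s]]])
qed

lemma exists_succ_pow_sized_subsets:
  fixes X :: "nat \<Rightarrow> 'a set" and \<kappa> :: "'k rel"
  assumes "\<forall>i<n. \<exists>r::'r rel. succ_pow \<kappa> i r \<and> r \<le>o |X i|"
  shows "\<exists>Y. \<forall>i<n. Y i \<subseteq> X i \<and> (\<exists>r::'r rel. succ_pow \<kappa> i r \<and> |Y i| =o r)"
proof -
  have "\<exists>Yi. Yi \<subseteq> X i \<and> (\<exists>r::'r rel. succ_pow \<kappa> i r \<and> |Yi| =o r)" if i: "i < n" for i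
  proof -
    obtain r :: "'r rel" where r: "succ_pow \<kappa> i r" "r \<le>o |X i|" using assms i by blast
    then obtain Yi where "Yi \<subseteq> X i" "|Yi| =o r"
      using exists_subset_card_of_ordIso[OF succ_pow_Card_order[OF r(1)] r(2)] by blast
    then show ?thesis using r(1) by blast
  qed
  then show ?thesis by metis
qed

lemma card_of_Fpow_lists_Times_ordLess_succ_pow:
  fixes \<kappa> :: "'k rel" and r :: "'r rel"
  assumes \<kappa>: "Card_order \<kappa>" "natLeq \<le>o \<kappa>"
    and Y: "\<forall>i<n. \<exists>s::'r rel. succ_pow \<kappa> i s \<and> |Y i| \<le>o s"
    and r: "succ_pow \<kappa> n r" and C: "|C| <o \<kappa>"
  shows "|{xs. set xs \<subseteq> Fpow (\<Union>i<n. Y i) \<and> length xs = n} \<times> C| <o r"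
proof (cases n)
  case 0
  then have "{xs. set xs \<subseteq> Fpow (\<Union>i<n. Y i) \<and> length xs = n} \<times> C = Pair [] ` C" by auto
  then have "|{xs. set xs \<subseteq> Fpow (\<Union>i<n. Y i) \<and> length xs = n} \<times> C| \<le>o |C|"
    using card_of_image by metis
  then show ?thesis
    using ordLeq_ordLess_trans[OF _ ordLess_ordLeq_trans[OF C succ_pow_ordLeq_base[OF r]]] by blast
next
  case (Suc m)
  obtain s :: "'r rel" where s: "succ_pow \<kappa> m s" "r =o cardSuc s" using r Suc by auto
  have cs: "Card_order s" by (rule succ_pow_Card_order[OF s(1)])
  have \<kappa>s: "\<kappa> \<le>o s" by (rule succ_pow_ordLeq_base[OF s(1)])
  have Fs: "|Field s| =o s" by (rule card_of_Field_ordIso[OF cs])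
  have "natLeq \<le>o |Field s|"
    by (rule ordLeq_transitive[OF \<kappa>(2) ordLeq_ordIso_trans[OF \<kappa>s ordIso_symmetric[OF Fs]]])
  then have inf: "infinite (Field s)" using infinite_iff_natLeq_ordLeq by blast
  have "|Y i| \<le>o |Field s|" if i: "i < n" for i
  proof -
    obtain si :: "'r rel" where si: "succ_pow \<kappa> i si" "|Y i| \<le>o si" using Y i by blast
    have "si \<le>o s" using succ_pow_mono[OF si(1) s(1)] i Suc by simp
    then show ?thesis
      by (rule ordLeq_transitive[OF si(2) ordLeq_ordIso_trans[OF _ ordIso_symmetric[OF Fs]]])
  qed
  then have "|\<Union>i<n. Y i| \<le>o |Field s|"
    using card_of_UNION_ordLeq_infinite[OF inf card_of_finite_ordLeq_infinite[OF finite_lessThan inf]]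
    by blast
  then have "|lists (Fpow (\<Union>i<n. Y i)) \<times> C| <o cardSuc s"
    using card_of_lists_Fpow_Times_ordLess_cardSuc[OF cs inf] ordLeq_ordIso_trans[OF _ Fs]
      ordLess_imp_ordLeq[OF ordLess_ordLeq_trans[OF C \<kappa>s]] by blast
  moreover have "{xs. set xs \<subseteq> Fpow (\<Union>i<n. Y i) \<and> length xs = n} \<times> C
      \<subseteq> lists (Fpow (\<Union>i<n. Y i)) \<times> C" by auto
  ultimately show ?thesis
    using ordLess_ordIso_trans[OF ordLeq_ordLess_trans[OF card_of_mono1] ordIso_symmetric[OF s(2)]]
    by blast
qed

lemma prod_tuples_mono: "\<forall>i<n. B i \<subseteq> X i \<Longrightarrow> prod_tuples n B \<subseteq> prod_tuples n X"
  by (auto simp: prod_tuples_def)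

lemma prod_tuples_cong: "\<forall>i<n. B i = B' i \<Longrightarrow> prod_tuples n B = prod_tuples n B'"
  by (auto simp: prod_tuples_def)

lemma prod_tuples_Suc:
  "prod_tuples (Suc n) X = (\<lambda>(t, y). t @ [y]) ` (prod_tuples n X \<times> X n)"
proof (intro set_eqI iffI)
  fix x assume x: "x \<in> prod_tuples (Suc n) X"
  then have "x = take n x @ [x ! n]"
    by (simp add: prod_tuples_def take_Suc_conv_app_nth[symmetric])
  moreover have "take n x \<in> prod_tuples n X" "x ! n \<in> X n"
    using x by (auto simp: prod_tuples_def)
  ultimately show "x \<in> (\<lambda>(t, y). t @ [y]) ` (prod_tuples n X \<times> X n)" by force
qed (auto simp: prod_tuples_def nth_append less_Suc_eq)

lemma append_in_prod_tuples_Suc: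
  "t \<in> prod_tuples n X \<Longrightarrow> y \<in> X n \<Longrightarrow> t @ [y] \<in> prod_tuples (Suc n) X"
  unfolding prod_tuples_Suc by force

lemma prod_tuples_nonempty: "\<forall>i<n. B i \<noteq> {} \<Longrightarrow> prod_tuples n B \<noteq> {}"
proof -
  assume "\<forall>i<n. B i \<noteq> {}"
  then have "map (\<lambda>i. SOME x. x \<in> B i) [0..<n] \<in> prod_tuples n B"
    by (auto simp: prod_tuples_def some_in_eq)
  then show ?thesis by blast
qed

definition monochromatic_box ::
    "nat \<Rightarrow> nat \<Rightarrow> (nat \<Rightarrow> 'a set) \<Rightarrow> ('a list \<Rightarrow> 'c) \<Rightarrow> (nat \<Rightarrow> 'a set) \<Rightarrow> 'c \<Rightarrow> bool" where
  "monochromatic_box n k X c B a \<longleftrightarrow>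
     (\<forall>i<n. B i \<subseteq> X i \<and> finite (B i) \<and> card (B i) = k) \<and> (\<forall>x\<in>prod_tuples n B. c x = a)"

lemma monochromatic_box_colour:
  assumes "monochromatic_box n k X c B a" and "0 < k"
  shows "a \<in> c ` prod_tuples n X"
proof -
  have "\<forall>i<n. B i \<noteq> {}" using assms by (auto simp: monochromatic_box_def)
  then obtain x where "x \<in> prod_tuples n B" using prod_tuples_nonempty by blast
  moreover have "prod_tuples n B \<subseteq> prod_tuples n X"
    using assms(1) by (intro prod_tuples_mono) (simp add: monochromatic_box_def)
  ultimately show ?thesis using assms(1) unfolding monochromatic_box_def by force
qed

lemma monochromatic_box_Suc:
  assumes "\<forall>i<n. B i \<subseteq> X i \<and> finite (B i) \<and> card (B i) = k"
    and "\<forall>y\<in>T. \<forall>t\<in>prod_tuples n B. c (t @ [y]) = a"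
    and "T \<subseteq> X n" "finite T" "card T = k"
  shows "monochromatic_box (Suc n) k X c (B(n := T)) a"
  unfolding monochromatic_box_def
proof (intro conjI)
  show "\<forall>i<Suc n. (B(n := T)) i \<subseteq> X i \<and> finite ((B(n := T)) i) \<and> card ((B(n := T)) i) = k"
    using assms by (auto simp: less_Suc_eq)
  have "prod_tuples n (B(n := T)) = prod_tuples n B" by (rule prod_tuples_cong) simp
  then show "\<forall>x\<in>prod_tuples (Suc n) (B(n := T)). c x = a"
    using assms(2) by (auto simp: prod_tuples_Suc)
qed

lemma image_slice_subset:
  assumes "prod_tuples n Y \<subseteq> prod_tuples n X" and "y \<in> X n"
  shows "(\<lambda>t. c (t @ [y])) ` prod_tuples n Y \<subseteq> c ` prod_tuples (Suc n) X"
proof (rule image_subsetI)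
  fix t assume "t \<in> prod_tuples n Y"
  then have "t @ [y] \<in> prod_tuples (Suc n) X"
    by (rule append_in_prod_tuples_Suc[OF subsetD[OF assms(1)] assms(2)])
  then show "c (t @ [y]) \<in> c ` prod_tuples (Suc n) X" by (rule imageI)
qed

lemma monochromatic_box_of_slices:
  fixes \<kappa> :: "'k rel" and r :: "'r rel"
  assumes \<kappa>: "Card_order \<kappa>" "natLeq \<le>o \<kappa>" and k: "0 < k"
    and Y: "\<forall>i<n. Y i \<subseteq> X i \<and> (\<exists>s::'r rel. succ_pow \<kappa> i s \<and> |Y i| \<le>o s)"
    and r: "succ_pow \<kappa> n r" "r \<le>o |X n|"
    and C: "|c ` prod_tuples (Suc n) X| <o \<kappa>"
    and slices: "\<forall>y\<in>X n. monochromatic_box n k Y (\<lambda>t. c (t @ [y])) (B y) (a y)"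
  shows "\<exists>B a. monochromatic_box (Suc n) k X c B a"
proof -
  have YX: "prod_tuples n Y \<subseteq> prod_tuples n X" using Y by (intro prod_tuples_mono) blast
  have Y_bound: "\<forall>i<n. \<exists>s::'r rel. succ_pow \<kappa> i s \<and> |Y i| \<le>o s" using Y by blast
  define code where "code y = (map (B y) [0..<n], a y)" for y
  define D where
    "D = {xs. set xs \<subseteq> Fpow (\<Union>i<n. Y i) \<and> length xs = n} \<times> c ` prod_tuples (Suc n) X"
  have "code ` X n \<subseteq> D"
  proof (rule image_subsetI)
    fix y assume y: "y \<in> X n"
    have "set (map (B y) [0..<n]) \<subseteq> Fpow (\<Union>i<n. Y i)"
      using slices y by (fastforce simp: monochromatic_box_def Fpow_def)
    moreover have "a y \<in> c ` prod_tuples (Suc n) X"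
      using monochromatic_box_colour[OF slices[rule_format, OF y] k]
      by (rule subsetD[OF image_slice_subset[OF YX y]])
    ultimately show "code y \<in> D" by (simp add: D_def code_def)
  qed
  moreover have "|D| <o |X n|"
    using card_of_Fpow_lists_Times_ordLess_succ_pow[OF \<kappa> Y_bound r(1) C] unfolding D_def
    by (rule ordLess_ordLeq_trans[OF _ r(2)])
  moreover have "infinite (X n)"
    using ordLeq_transitive[OF \<kappa>(2) ordLeq_transitive[OF succ_pow_ordLeq_base[OF r(1)] r(2)]]
      infinite_iff_natLeq_ordLeq by blast
  ultimately obtain p where "infinite {y\<in>X n. code y = p}"
    using infinite_fiber[of code "X n" D] by blast
  then obtain T where T: "finite T" "card T = k" "T \<subseteq> {y\<in>X n. code y = p}"
    using infinite_arbitrarily_large by blast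
  then obtain y0 where y0: "y0 \<in> T" using k by fastforce
  have "monochromatic_box (Suc n) k X c ((B y0)(n := T)) (a y0)"
  proof (rule monochromatic_box_Suc)
    have "y0 \<in> X n" using y0 T(3) by blast
    then show "\<forall>i<n. B y0 i \<subseteq> X i \<and> finite (B y0 i) \<and> card (B y0 i) = k"
      using slices Y by (fastforce simp: monochromatic_box_def)
    show "\<forall>y\<in>T. \<forall>t\<in>prod_tuples n (B y0). c (t @ [y]) = a y0"
    proof (intro ballI)
      fix y t assume y: "y \<in> T" and t: "t \<in> prod_tuples n (B y0)"
      have "code y = code y0" using y y0 T(3) by blast
      then have "map (B y) [0..<n] = map (B y0) [0..<n]" and same_colour: "a y = a y0"
        by (simp_all add: code_def)
      then have "prod_tuples n (B y0) = prod_tuples n (B y)"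
        by (intro prod_tuples_cong) (simp add: map_eq_conv)
      then have "t \<in> prod_tuples n (B y)" using t by simp
      moreover have "y \<in> X n" using y T(3) by blast
      ultimately show "c (t @ [y]) = a y0"
        using slices same_colour by (simp add: monochromatic_box_def)
    qed
  qed (use T in auto)
  then show ?thesis by blast
qed

lemma monochromatic_box_exists:
  fixes \<kappa> :: "'k rel" and X :: "nat \<Rightarrow> 'a set" and c :: "'a list \<Rightarrow> 'c"
  assumes \<kappa>: "Card_order \<kappa>" "natLeq \<le>o \<kappa>" and k: "0 < k"
    and "\<forall>i<n. \<exists>r::'a rel. succ_pow \<kappa> i r \<and> r \<le>o |X i|"
    and "|c ` prod_tuples n X| <o \<kappa>"
  shows "\<exists>B a. monochromatic_box n k X c B a"
  using assms(4,5)
proof (induction n arbitrary: X c)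
  case 0
  have "monochromatic_box 0 k X c B (c [])" for B
    by (simp add: monochromatic_box_def prod_tuples_def)
  then show ?case by blast
next
  case (Suc n)
  obtain r :: "'a rel" where r: "succ_pow \<kappa> n r" "r \<le>o |X n|" using Suc.prems(1) by blast
  have "\<forall>i<n. \<exists>r::'a rel. succ_pow \<kappa> i r \<and> r \<le>o |X i|" using Suc.prems(1) by simp
  from exists_succ_pow_sized_subsets[OF this]
  obtain Y where Y: "\<forall>i<n. Y i \<subseteq> X i \<and> (\<exists>r::'a rel. succ_pow \<kappa> i r \<and> |Y i| =o r)"
    by blast
  have YX: "prod_tuples n Y \<subseteq> prod_tuples n X" using Y by (intro prod_tuples_mono) blast
  have "\<exists>B a. monochromatic_box n k Y (\<lambda>t. c (t @ [y])) B a" if y: "y \<in> X n" for y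
  proof (rule Suc.IH)
    show "\<forall>i<n. \<exists>r::'a rel. succ_pow \<kappa> i r \<and> r \<le>o |Y i|"
      using Y ordIso_imp_ordLeq[OF ordIso_symmetric] by blast
    show "|(\<lambda>t. c (t @ [y])) ` prod_tuples n Y| <o \<kappa>"
      by (rule ordLeq_ordLess_trans[OF card_of_mono1[OF image_slice_subset[OF YX y]] Suc.prems(2)])
  qed
  then have "\<forall>y\<in>X n. \<exists>B a. monochromatic_box n k Y (\<lambda>t. c (t @ [y])) B a" by blast
  then obtain B where "\<forall>y\<in>X n. \<exists>a. monochromatic_box n k Y (\<lambda>t. c (t @ [y])) (B y) a"
    by (rule bchoice[elim_format]) blast
  then obtain a where "\<forall>y\<in>X n. monochromatic_box n k Y (\<lambda>t. c (t @ [y])) (B y) (a y)"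
    by (rule bchoice[elim_format]) blast
  moreover have "\<forall>i<n. Y i \<subseteq> X i \<and> (\<exists>s::'a rel. succ_pow \<kappa> i s \<and> |Y i| \<le>o s)"
    using Y ordIso_imp_ordLeq by blast
  ultimately show ?case using monochromatic_box_of_slices[OF \<kappa> k _ r Suc.prems(2)] by blast
qed

lemma hom_image_in_box:
  assumes P: "template d k P" and B: "\<forall>i<d. finite (B i) \<and> k \<le> card (B i)"
  shows "\<exists>Q\<subseteq>prod_tuples d B. template d k Q \<and> hom_image d P Q"
proof -
  have fin: "finite P" and card: "card P = k" and len: "\<forall>x\<in>P. length x = d"
    using P by (auto simp: template_def)
  have "\<exists>g. g ` (\<lambda>x. x ! i) ` P \<subseteq> B i \<and> inj_on g ((\<lambda>x. x ! i) ` P)" if i: "i < d" for i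
  proof (rule card_le_inj)
    have "card ((\<lambda>x. x ! i) ` P) \<le> card P" by (rule card_image_le[OF fin])
    then show "card ((\<lambda>x. x ! i) ` P) \<le> card (B i)" using card B i le_trans by blast
  qed (use fin B i in auto)
  then have "\<forall>i. \<exists>g. i < d \<longrightarrow> g ` (\<lambda>x. x ! i) ` P \<subseteq> B i \<and> inj_on g ((\<lambda>x. x ! i) ` P)"
    by blast
  then obtain g where g: "\<forall>i<d. g i ` (\<lambda>x. x ! i) ` P \<subseteq> B i \<and> inj_on (g i) ((\<lambda>x. x ! i) ` P)"
    by (subst (asm) choice_iff) blast
  define f where "f x = map (\<lambda>i. g i (x ! i)) [0..<d]" for x
  have "inj_on f P"
  proof (rule inj_onI)
    fix x y assume x: "x \<in> P" and y: "y \<in> P" and "f x = f y"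
    have "x ! i = y ! i" if i: "i < d" for i
    proof (rule inj_onD)
      show "inj_on (g i) ((\<lambda>x. x ! i) ` P)" using g i by blast
      have "f x ! i = f y ! i" using \<open>f x = f y\<close> by simp
      then show "g i (x ! i) = g i (y ! i)" using i by (simp add: f_def)
    qed (use x y in auto)
    then show "x = y" using x y len by (intro nth_equalityI) auto
  qed
  then have "template d k (f ` P)"
    using fin card by (simp add: template_def card_image) (simp add: f_def)
  moreover have "f ` P \<subseteq> prod_tuples d B"
  proof
    fix z assume "z \<in> f ` P"
    then obtain x where "x \<in> P" "z = f x" by blast
    then show "z \<in> prod_tuples d B" using g by (auto simp: f_def prod_tuples_def)
  qed
  moreover have "hom_image d P (f ` P)" unfolding hom_image_def by (auto simp: f_def)
  ultimately show ?thesis by blast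
qed

theorem lemma1p2:
  fixes kappa :: "'k rel" and d k :: nat and P :: "'b list set"
    and X :: "nat \<Rightarrow> 'a set"
  assumes "1 \<le> d" and "2 \<le> k"
    and "Card_order kappa" and "(natLeq, kappa) \<in> ordLeq"
    and "template d k P"
    and "\<forall>i<d. \<exists>r::'a rel. succ_pow kappa i r \<and> (r, card_of (X i)) \<in> ordLeq"
  shows "chi_ge (prod_tuples d X) (L_edges d X P) kappa TYPE('c)"
  unfolding chi_ge_def
proof (intro allI impI notI)
  fix c :: "'a list \<Rightarrow> 'c"
  assume proper: "proper_coloring (prod_tuples d X) (L_edges d X P) c"
    and few: "|c ` prod_tuples d X| <o kappa"
  obtain B a where box: "monochromatic_box d k X c B a"
    using monochromatic_box_exists[OF assms(3,4) _ assms(6) few, of k] assms(2) by auto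
  then have "\<forall>i<d. finite (B i) \<and> k \<le> card (B i)" by (simp add: monochromatic_box_def)
  then obtain Q where Q: "Q \<subseteq> prod_tuples d B" "template d k Q" "hom_image d P Q"
    using hom_image_in_box[OF assms(5)] by blast
  have "prod_tuples d B \<subseteq> prod_tuples d X"
    using box by (intro prod_tuples_mono) (simp add: monochromatic_box_def)
  then have "Q \<in> L_edges d X P"
    using Q assms(5) by (auto simp: L_edges_def template_def)
  moreover have "\<forall>x\<in>Q. c x = a" using Q(1) box by (auto simp: monochromatic_box_def)
  ultimately show False using proper by (auto simp: proper_coloring_def)
qed

end
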